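(* Let $Y$ be a $\mathbb{Q}$-vector space, let $f:\mathbb{R}\to Y$, let $s\ge 1$, and let $I_k=(a_k,b_k)$, $k=1,\dots,s$, be nonempty open intervals of $\mathbb{R}$. If $\Delta_{h_1h_2\cdots h_s}f(x)=0$ for all $x\in\mathbb{R}$ and all $h_k\in I_k$, $k=1,\dots,s$, then $\Delta_{h_1h_2\cdots h_s}f(x)=0$ for all $(x,h_1,\dots,h_s)\in\mathbb{R}^{s+1}$.
   Context: For $f:X\to Y$ between $\mathbb{Q}$-vector spaces and $h\in X$, $\Delta_hf(x)=f(x+h)-f(x)$, and iterated differences are defined recursively by $\Delta_{h_1h_2\cdots h_s}f(x)=\Delta_{h_1}\left(\Delta_{h_2\cdots h_s}f\right)(x)$ for $s\ge 2$. *)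

theory Defs
  imports Main "HOL-Analysis.Analysis"
begin

definition diff1 :: "'a::ab_group_add \<Rightarrow> ('a \<Rightarrow> 'b::ab_group_add) \<Rightarrow> 'a \<Rightarrow> 'b" where
  "diff1 h f x = f (x + h) - f x"

fun iter_diff :: "'a::ab_group_add list \<Rightarrow> ('a \<Rightarrow> 'b::ab_group_add) \<Rightarrow> 'a \<Rightarrow> 'b" where
  "iter_diff [] f = f"
| "iter_diff (h # hs) f = diff1 h (iter_diff hs f)"

end

theory Submission
  imports Defs
begin

text \<open>
  Write an iterated difference with one step h removed as a function g,
  so that the full difference is diff1 h g.  If it vanishes for every h in a nonempty
  open interval (a, b), then g has every element of (a, b) as a period; differences of
  two such periods give every u with |u| < b - a as a period, and multiples of these
  give every real number.  Hence the difference vanishes for every h.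

  Releasing the interval constraints on the
  coordinates 0, 1, ..., s - 1 in turn yields the theorem.
\<close>

lemma diff1_commute: "diff1 h (diff1 k g) = diff1 k (diff1 h g)"
  by (rule ext) (simp add: diff1_def algebra_simps)

lemma iter_diff_diff1_commute: "iter_diff hs (diff1 h g) = diff1 h (iter_diff hs g)"
  by (induction hs) (simp_all add: diff1_commute)

lemma iter_diff_append: "iter_diff (hs @ ks) f = iter_diff hs (iter_diff ks f)"
  by (induction hs) simp_all

lemma iter_diff_list_update:
  assumes "j < length hs"
  shows "iter_diff (hs[j := t]) f = diff1 t (iter_diff (take j hs @ drop (Suc j) hs) f)"
  using assms by (simp add: upd_conv_take_nth_drop iter_diff_append iter_diff_diff1_commute)

lemma period_multiple:
  fixes g :: "real \<Rightarrow> 'b"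
  assumes per: "\<forall>y. g (y + v) = g y"
  shows "g (y + real m * v) = g y"
proof (induction m)
  case 0
  show ?case by simp
next
  case (Suc m)
  have "y + real (Suc m) * v = (y + real m * v) + v" by (simp add: algebra_simps)
  then show ?case using per Suc.IH by (metis add.assoc)
qed

text \<open>Differences of periods from (a, b) give every u with |u| < b - a.\<close>
lemma short_period:
  fixes g :: "real \<Rightarrow> 'b"
  assumes per: "\<forall>t\<in>{a<..<b}. \<forall>y. g (y + t) = g y" and u: "\<bar>u\<bar> < b - a"
  shows "g (x + u) = g x"
proof -
  define t1 where "t1 = (a + b) / 2 + u / 2"
  define t2 where "t2 = (a + b) / 2 - u / 2"
  have t1: "t1 \<in> {a<..<b}" and t2: "t2 \<in> {a<..<b}"
    using u by (auto simp: t1_def t2_def abs_less_iff field_simps)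
  have "g (x + u) = g ((x - t2) + t1)" by (simp add: t1_def t2_def)
  also have "\<dots> = g (x - t2)" using per t1 by blast
  also have "\<dots> = g ((x - t2) + t2)" using per t2 by (metis diff_add_cancel)
  finally show ?thesis by simp
qed

lemma interval_periods_imp_periodic:
  fixes g :: "real \<Rightarrow> 'b"
  assumes per: "\<forall>t\<in>{a<..<b}. \<forall>y. g (y + t) = g y" and "a < b"
  shows "g (x + h) = g x"
proof -
  obtain n :: nat where n: "\<bar>h\<bar> < real n * (b - a)"
    using reals_Archimedean3 \<open>a < b\<close> by (metis diff_gt_0_iff_gt)
  then have "n > 0" by (cases n) auto
  define v where "v = h / real n"
  have "\<bar>v\<bar> < b - a"
    using n \<open>n > 0\<close> by (simp add: v_def abs_divide field_simps)
  then have "\<forall>y. g (y + v) = g y" using short_period[OF per] by blast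
  moreover have "h = real n * v" using \<open>n > 0\<close> by (simp add: v_def)
  ultimately show ?thesis using period_multiple by metis
qed

lemma release_one_step:
  fixes f :: "real \<Rightarrow> 'b::ab_group_add"
  assumes "a < b" and j: "j < length hs"
    and zero: "\<forall>t\<in>{a<..<b}. \<forall>y. iter_diff (hs[j := t]) f y = 0"
  shows "iter_diff (hs[j := t]) f x = 0"
proof -
  define g where "g = iter_diff (take j hs @ drop (Suc j) hs) f"
  have step: "iter_diff (hs[j := t']) f = diff1 t' g" for t'
    using j by (simp add: iter_diff_list_update g_def)
  have "\<forall>t'\<in>{a<..<b}. \<forall>y. g (y + t') = g y"
    using zero by (simp add: step diff1_def)
  then have "g (x + t) = g x" using interval_periods_imp_periodic \<open>a < b\<close> by blast
  then show ?thesis by (simp add: step diff1_def)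
qed

lemma release_first_steps:
  fixes f :: "real \<Rightarrow> 'b::ab_group_add"
  assumes ab: "\<forall>k<s. a k < b k"
    and zero: "\<forall>x hs. length hs = s \<and> (\<forall>k<s. hs ! k \<in> {a k<..<b k}) \<longrightarrow> iter_diff hs f x = 0"
    and "j \<le> s"
  shows "\<forall>x hs. length hs = s \<and> (\<forall>k<s. j \<le> k \<longrightarrow> hs ! k \<in> {a k<..<b k})
           \<longrightarrow> iter_diff hs f x = 0"
  using \<open>j \<le> s\<close>
proof (induction j)
  case 0
  then show ?case using zero by simp
next
  case (Suc j)
  then have j: "j < s" by simp
  show ?case
  proof (intro allI impI)
    fix x and hs :: "real list"
    assume hs: "length hs = s \<and> (\<forall>k<s. Suc j \<le> k \<longrightarrow> hs ! k \<in> {a k<..<b k})"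
    have "\<forall>t\<in>{a j<..<b j}. \<forall>y. iter_diff (hs[j := t]) f y = 0"
      using Suc.IH j hs by (auto simp: nth_list_update)
    then have "iter_diff (hs[j := hs ! j]) f x = 0"
      using release_one_step[of "a j" "b j" j hs f "hs ! j" x] ab j hs by simp
    then show "iter_diff hs f x = 0" by simp
  qed
qed

theorem theorem2:
  fixes scale :: "rat \<Rightarrow> 'b::ab_group_add \<Rightarrow> 'b"
    and f :: "real \<Rightarrow> 'b"
    and s :: nat
    and a b :: "nat \<Rightarrow> real"
  assumes "vector_space scale"
    and "s \<ge> 1"
    and "\<forall>k<s. a k < b k"
    and "\<forall>x hs. length hs = s \<and> (\<forall>k<s. hs ! k \<in> {a k<..<b k}) \<longrightarrow> iter_diff hs f x = 0"
  shows "\<forall>x hs. length hs = s \<longrightarrow> iter_diff hs f x = 0"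
  using release_first_steps[OF assms(3,4), of s] by simp

end
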